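(* Let $(S_t)_{t\ge1}$ be i.i.d. Bernoulli$(1/2)$ random variables, $T=T(t):=\sum_{i\le t}S_i$, $T'=t-T$, and let $(G_i)_{i\ge1}$, $(G'_i)_{i\ge1}$ be independent sequences of i.i.d. standard Gaussian random variables, independent of $(S_t)$. Then almost surely $$\frac12\Big(\frac1T\sum_{i=1}^TG_i+\frac1{T'}\sum_{i=1}^{T'}G'_i\Big)=\frac1t\Big(\sum_{i=1}^TG_i+\sum_{i=1}^{T'}G'_i\Big)+O\Big(\frac{\log\log t}{t}\Big)\quad(t\to\infty).$$ *)

theory Defs
  imports "HOL-Probability.Probability" "HOL-Library.Landau_Symbols"
begin

definition succ_count :: "(nat \<Rightarrow> 'a \<Rightarrow> real) \<Rightarrow> nat \<Rightarrow> 'a \<Rightarrow> nat" where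
  "succ_count S t \<omega> = card {i \<in> {1..t}. S i \<omega> = 1}"

definition joint_family ::
  "(nat \<Rightarrow> 'a \<Rightarrow> real) \<Rightarrow> (nat \<Rightarrow> 'a \<Rightarrow> real) \<Rightarrow> (nat \<Rightarrow> 'a \<Rightarrow> real) \<Rightarrow> nat + nat + nat \<Rightarrow> 'a \<Rightarrow> real" where
  "joint_family S G G' k = (case k of Inl n \<Rightarrow> S n | Inr (Inl n) \<Rightarrow> G n | Inr (Inr n) \<Rightarrow> G' n)"

definition joint_index :: "(nat + nat + nat) set" where
  "joint_index = {k. case k of Inl n \<Rightarrow> n \<ge> 1 | Inr (Inl n) \<Rightarrow> n \<ge> 1 | Inr (Inr n) \<Rightarrow> n \<ge> 1}"

end

(*
  Write T = t/2 + D with D = sum_{i<=t} (S_i - 1/2), and let A, B be the two Gaussian partial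
  sums evaluated at T and T' = t - T. The error in question is exactly
  (t - 2T)/(2t) * (A/T - B/T'). D and the Gaussian partial sums are partial sums of independent
  sub-Gaussian variables, and such partial sums are almost surely O(sqrt (n log log n)): cut
  {1..n} along the binary digits of n into at most one dyadic block per level, and choose the
  block radii so that the sub-Gaussian tail probabilities of all blocks are summable;
  by Borel-Cantelli only finitely many blocks ever exceed their radius. Hence T ~ t/2 and the
  error is O((sqrt (t log log t) / t)^2) = O(log log t / t).
*)
theory Submission
  imports Defs "HOL-Real_Asymp.Real_Asymp"
begin

section \<open>Reindexing independent families\<close>

lemma (in prob_space) indep_sets_reindex:
  assumes inj: "inj_on f I" and indep: "indep_sets F (f ` I)"
  shows "indep_sets (\<lambda>i. F (f i)) I"
proof (rule indep_setsI)
  show "F (f i) \<subseteq> events" if "i \<in> I" for i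
    using indep that by (auto simp: indep_sets_def)
next
  fix A J assume J: "J \<noteq> {}" "J \<subseteq> I" "finite J" and A: "\<forall>j\<in>J. A j \<in> F (f j)"
  have inj_J: "inj_on f J" using inj J(2) by (rule inj_on_subset)
  define A' where "A' = (\<lambda>k. A (inv_into J f k))"
  have "prob (\<Inter>k\<in>f ` J. A' k) = (\<Prod>k\<in>f ` J. prob (A' k))"
    using J A inj_J by (intro indep_setsD[OF indep]) (auto simp: A'_def)
  then show "prob (\<Inter>j\<in>J. A j) = (\<Prod>j\<in>J. prob (A j))"
    using inj_J by (simp add: A'_def prod.reindex)
qed

lemma (in prob_space) indep_vars_reindex:
  assumes "inj_on f I" and "indep_vars M' X (f ` I)"
  shows "indep_vars (\<lambda>i. M' (f i)) (\<lambda>i. X (f i)) I"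
  using assms indep_sets_reindex[OF assms(1), of "\<lambda>k. {X k -` A \<inter> space M | A. A \<in> sets (M' k)}"]
  by (simp add: indep_vars_def2)

lemma (in prob_space) indep_vars_joint_family:
  assumes "indep_vars (\<lambda>_. borel) (joint_family S G G') joint_index"
  shows "indep_vars (\<lambda>_. borel) S {1..}" "indep_vars (\<lambda>_. borel) G {1..}"
    "indep_vars (\<lambda>_. borel) G' {1..}"
proof -
  have component: "indep_vars (\<lambda>_. borel) (\<lambda>i. joint_family S G G' (e i)) {1..}"
    if "inj e" and "e ` {1..} \<subseteq> joint_index" for e :: "nat \<Rightarrow> nat + nat + nat"
    by (rule indep_vars_reindex[OF inj_on_subset[OF that(1) subset_UNIV]])
       (rule indep_vars_subset[OF assms that(2)])
  show "indep_vars (\<lambda>_. borel) S {1..}"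
    using component[of Inl] by (simp add: joint_family_def joint_index_def image_subset_iff)
  show "indep_vars (\<lambda>_. borel) G {1..}"
    using component[of "\<lambda>i. Inr (Inl i)"] by (simp add: joint_family_def joint_index_def image_subset_iff inj_def)
  show "indep_vars (\<lambda>_. borel) G' {1..}"
    using component[of "\<lambda>i. Inr (Inr i)"] by (simp add: joint_family_def joint_index_def image_subset_iff inj_def)
qed

section \<open>Sub-Gaussian variables\<close>

definition subgaussian :: "'a measure \<Rightarrow> real \<Rightarrow> ('a \<Rightarrow> real) \<Rightarrow> bool" where
  "subgaussian M c X \<longleftrightarrow>
     (\<forall>l. (\<integral>\<^sup>+\<omega>. ennreal (exp (l * X \<omega>)) \<partial>M) \<le> ennreal (exp (l\<^sup>2 * c / 2)))"

lemma subgaussian_uminus: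
  assumes "subgaussian M c X"
  shows "subgaussian M c (\<lambda>\<omega>. - X \<omega>)"
  unfolding subgaussian_def
proof
  fix l :: real
  show "(\<integral>\<^sup>+\<omega>. ennreal (exp (l * - X \<omega>)) \<partial>M) \<le> ennreal (exp (l\<^sup>2 * c / 2))"
    using assms[unfolded subgaussian_def, rule_format, of "- l"] by simp
qed

lemma (in prob_space) subgaussian_sum_tail_ge:
  fixes X :: "'i \<Rightarrow> 'a \<Rightarrow> real"
  assumes I: "finite I" "I \<noteq> {}" and indep: "indep_vars (\<lambda>_. borel) X I"
    and subG: "\<And>i. i \<in> I \<Longrightarrow> subgaussian M c (X i)"
    and c: "c > 0" and \<epsilon>: "\<epsilon> > 0"
  shows "prob {\<omega>\<in>space M. \<epsilon> \<le> (\<Sum>i\<in>I. X i \<omega>)} \<le> exp (- \<epsilon>\<^sup>2 / (2 * c * card I))"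
proof -
  have [measurable]: "\<And>i. i \<in> I \<Longrightarrow> X i \<in> borel_measurable M"
    using indep unfolding indep_vars_def by auto
  define d where "d = c * real (card I)"
  have d: "d > 0" using c I by (simp add: d_def card_gt_0_iff)
  define l where "l = \<epsilon> / d"
  have l: "l > 0" using \<epsilon> d by (simp add: l_def)
  have "ennreal (prob {\<omega>\<in>space M. \<epsilon> \<le> (\<Sum>i\<in>I. X i \<omega>)}) = emeasure M {\<omega>\<in>space M. (\<Sum>i\<in>I. X i \<omega>) \<ge> \<epsilon>}"
    by (simp add: emeasure_eq_measure)
  also have "\<dots> \<le> ennreal (exp (- l * \<epsilon>)) * (\<integral>\<^sup>+\<omega>. ennreal (exp (l * (\<Sum>i\<in>I. X i \<omega>))) * indicator (space M) \<omega> \<partial>M)"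
    by (intro Chernoff_ineq_nn_integral_ge l) auto
  also have "(\<integral>\<^sup>+\<omega>. ennreal (exp (l * (\<Sum>i\<in>I. X i \<omega>))) * indicator (space M) \<omega> \<partial>M)
      = (\<integral>\<^sup>+\<omega>. (\<Prod>i\<in>I. ennreal (exp (l * X i \<omega>))) \<partial>M)"
    by (intro nn_integral_cong) (simp add: sum_distrib_left exp_sum I prod_ennreal)
  also have "\<dots> = (\<Prod>i\<in>I. \<integral>\<^sup>+\<omega>. ennreal (exp (l * X i \<omega>)) \<partial>M)"
    by (intro indep_vars_nn_integral I indep_vars_compose2[OF indep]) auto
  also have "ennreal (exp (- l * \<epsilon>)) * \<dots> \<le> ennreal (exp (- l * \<epsilon>)) * (\<Prod>i\<in>I. ennreal (exp (l\<^sup>2 * c / 2)))"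
    using subG by (intro mult_left_mono prod_mono_ennreal) (auto simp: subgaussian_def)
  also have "\<dots> = ennreal (exp (- l * \<epsilon>) * exp (l\<^sup>2 * c / 2) ^ card I)"
    by (simp add: ennreal_power ennreal_mult)
  also have "exp (- l * \<epsilon>) * exp (l\<^sup>2 * c / 2) ^ card I = exp (d * l\<^sup>2 / 2 - l * \<epsilon>)"
    by (simp only: exp_of_nat_mult[symmetric] mult_exp_exp) (simp add: d_def algebra_simps)
  also have "d * l\<^sup>2 / 2 - l * \<epsilon> = - \<epsilon>\<^sup>2 / (2 * c * card I)"
    using d by (simp add: l_def d_def field_simps power2_eq_square)
  finally show ?thesis
    by (subst (asm) ennreal_le_iff) simp_all
qed

lemma (in prob_space) subgaussian_sum_tail_abs:
  fixes X :: "'i \<Rightarrow> 'a \<Rightarrow> real"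
  assumes I: "finite I" "I \<noteq> {}" and indep: "indep_vars (\<lambda>_. borel) X I"
    and subG: "\<And>i. i \<in> I \<Longrightarrow> subgaussian M c (X i)"
    and c: "c > 0" and \<epsilon>: "\<epsilon> > 0"
  shows "prob {\<omega>\<in>space M. \<epsilon> \<le> \<bar>\<Sum>i\<in>I. X i \<omega>\<bar>} \<le> 2 * exp (- \<epsilon>\<^sup>2 / (2 * c * card I))"
proof -
  have [measurable]: "\<And>i. i \<in> I \<Longrightarrow> X i \<in> borel_measurable M"
    using indep unfolding indep_vars_def by auto
  have indep_neg: "indep_vars (\<lambda>_. borel) (\<lambda>i \<omega>. - X i \<omega>) I"
    by (rule indep_vars_compose2[OF indep]) auto
  have subG_neg: "subgaussian M c (\<lambda>\<omega>. - X i \<omega>)" if "i \<in> I" for i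
    using subG[OF that] by (rule subgaussian_uminus)
  have "{\<omega>\<in>space M. \<epsilon> \<le> \<bar>\<Sum>i\<in>I. X i \<omega>\<bar>} =
        {\<omega>\<in>space M. \<epsilon> \<le> (\<Sum>i\<in>I. X i \<omega>)} \<union> {\<omega>\<in>space M. \<epsilon> \<le> (\<Sum>i\<in>I. - X i \<omega>)}"
    by (auto simp: sum_negf)
  also have "prob \<dots> \<le> prob {\<omega>\<in>space M. \<epsilon> \<le> (\<Sum>i\<in>I. X i \<omega>)} + prob {\<omega>\<in>space M. \<epsilon> \<le> (\<Sum>i\<in>I. - X i \<omega>)}"
    by (intro measure_Un_le) auto
  also have "\<dots> \<le> exp (- \<epsilon>\<^sup>2 / (2 * c * card I)) + exp (- \<epsilon>\<^sup>2 / (2 * c * card I))"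
    by (intro add_mono subgaussian_sum_tail_ge[OF I indep subG c \<epsilon>]
        subgaussian_sum_tail_ge[OF I indep_neg subG_neg c \<epsilon>])
  finally show ?thesis by simp
qed

lemma std_normal_nn_mgf:
  assumes "distributed M lborel X std_normal_density"
  shows "(\<integral>\<^sup>+\<omega>. ennreal (exp (l * X \<omega>)) \<partial>M) = ennreal (exp (l\<^sup>2 / 2))"
proof -
  (* the shifted density is written as an affine map to match nn_integral_real_affine *)
  have shift: "std_normal_density x * exp (l * x) = exp (l\<^sup>2 / 2) * std_normal_density (- l + 1 * x)"
    for x :: real
  proof -
    have "- x\<^sup>2 / 2 + l * x = l\<^sup>2 / 2 + - (- l + 1 * x)\<^sup>2 / 2"
      by (simp add: power2_eq_square field_simps)
    then show ?thesis unfolding std_normal_density_def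
      by (simp only: mult.assoc mult.left_commute[of "exp _"] mult_exp_exp)
  qed
  have "(\<integral>\<^sup>+\<omega>. ennreal (exp (l * X \<omega>)) \<partial>M)
      = (\<integral>\<^sup>+x. ennreal (std_normal_density x) * ennreal (exp (l * x)) \<partial>lborel)"
    by (rule distributed_nn_integral[OF assms, symmetric]) simp
  also have "\<dots> = (\<integral>\<^sup>+x. ennreal (exp (l\<^sup>2 / 2)) * ennreal (std_normal_density (- l + 1 * x)) \<partial>lborel)"
    by (simp add: shift flip: ennreal_mult)
  also have "\<dots> = ennreal (exp (l\<^sup>2 / 2)) * (\<integral>\<^sup>+x. ennreal (std_normal_density (- l + 1 * x)) \<partial>lborel)"
    by (rule nn_integral_cmult) simp
  also have "(\<integral>\<^sup>+x. ennreal (std_normal_density (- l + 1 * x)) \<partial>lborel) = 1"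
    using nn_integral_real_affine[of "\<lambda>x. ennreal (std_normal_density x)" 1 "-l"]
    by (simp add: nn_integral_eq_integral)
  finally show ?thesis by simp
qed

lemma std_normal_subgaussian:
  "distributed M lborel X std_normal_density \<Longrightarrow> subgaussian M 1 X"
  by (simp add: subgaussian_def std_normal_nn_mgf)

lemma (in prob_space) centered_bounded_subgaussian:
  assumes [measurable]: "random_variable borel X" and bounded: "AE \<omega> in M. X \<omega> \<in> {a..b}"
  shows "subgaussian M ((b - a)\<^sup>2 / 4) (\<lambda>\<omega>. X \<omega> - expectation X)"
  unfolding subgaussian_def
proof
  fix l :: real
  interpret X: interval_bounded_random_variable M X a b
    using bounded by unfold_locales simp_all
  interpret neg_X: interval_bounded_random_variable M "\<lambda>\<omega>. - X \<omega>" "- b" "- a"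
    by unfold_locales (use bounded in \<open>auto elim!: eventually_mono\<close>)
  have rate: "u\<^sup>2 * ((b - a)\<^sup>2 / 4) / 2 = u\<^sup>2 * (b - a)\<^sup>2 / 8" for u :: real
    by simp
  consider "l > 0" | "l = 0" | "l < 0" by linarith
  then show "(\<integral>\<^sup>+\<omega>. ennreal (exp (l * (X \<omega> - expectation X))) \<partial>M) \<le> ennreal (exp (l\<^sup>2 * ((b - a)\<^sup>2 / 4) / 2))"
  proof cases
    case 1
    then show ?thesis unfolding rate by (rule X.Hoeffdings_lemma_nn_integral)
  next
    case 2
    then show ?thesis by (simp add: emeasure_space_1)
  next
    case 3
    have "- l * (- X \<omega> - expectation (\<lambda>\<omega>. - X \<omega>)) = l * (X \<omega> - expectation X)" for \<omega>
      by (simp add: algebra_simps)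
    moreover have "(- l)\<^sup>2 * (- a - - b)\<^sup>2 / 8 = l\<^sup>2 * (b - a)\<^sup>2 / 8"
      by (simp add: power2_eq_square algebra_simps)
    ultimately show ?thesis
      using 3 neg_X.Hoeffdings_lemma_nn_integral[of "- l"] unfolding rate by simp
  qed
qed

lemma (in prob_space) bernoulli_half_centered_subgaussian:
  assumes [measurable]: "random_variable borel X"
    and zero_one: "AE \<omega> in M. X \<omega> \<in> {0, 1}" and half: "prob {\<omega> \<in> space M. X \<omega> = 1} = 1 / 2"
  shows "subgaussian M (1 / 4) (\<lambda>\<omega>. X \<omega> - 1 / 2)"
proof -
  have "expectation X = expectation (indicator {\<omega> \<in> space M. X \<omega> = 1})"
    using zero_one by (intro integral_cong_AE) (auto simp: indicator_def)
  then have E: "expectation X = 1 / 2"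
    using half by simp
  have "AE \<omega> in M. X \<omega> \<in> {0..1}"
    using zero_one by eventually_elim auto
  then have "subgaussian M ((1 - 0)\<^sup>2 / 4) (\<lambda>\<omega>. X \<omega> - expectation X)"
    by (intro centered_bounded_subgaussian) auto
  then show ?thesis
    unfolding E by simp
qed

section \<open>The rate sqrt (n log log n)\<close>

definition lil_rate :: "nat \<Rightarrow> real" where
  "lil_rate n = sqrt (real n * ln (ln (real n)))"

lemma ln_ln_ge_1:
  fixes n :: nat
  assumes "27 \<le> n"
  shows "1 \<le> ln (real n)" and "1 \<le> ln (ln (real n))"
proof -
  have "exp (exp 1) \<le> exp (3::real)" using exp_le by simp
  also have "\<dots> = exp 1 ^ 3" by (simp flip: exp_of_nat_mult)
  also have "\<dots> \<le> 3 ^ 3" using exp_le by (intro power_mono) auto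
  also have "\<dots> \<le> real n" using assms by simp
  finally have ln_n: "exp 1 \<le> ln (real n)"
    using assms by (subst ln_ge_iff) auto
  then show "1 \<le> ln (real n)"
    using exp_ge_add_one_self[of 1] by linarith
  then show "1 \<le> ln (ln (real n))"
    using ln_n by (subst ln_ge_iff) auto
qed

lemma lil_rate_ge_1:
  fixes n :: nat
  assumes "27 \<le> n"
  shows "1 \<le> lil_rate n"
  using ln_ln_ge_1(2)[OF assms] mult_mono[of 1 "real n" 1 "ln (ln (real n))"] assms
  by (simp add: lil_rate_def)

lemma lil_rate_eventually_mono:
  "\<forall>\<^sub>F m in sequentially. \<forall>n\<ge>m. 0 \<le> lil_rate m \<and> lil_rate m \<le> lil_rate n"
proof (rule eventually_sequentiallyI[of 27], intro allI impI conjI)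
  fix m n :: nat assume m: "27 \<le> m" and n: "m \<le> n"
  show "0 \<le> lil_rate m" using lil_rate_ge_1[OF m] by simp
  have "ln (real m) \<le> ln (real n)"
    using m n by simp
  then have "ln (ln (real m)) \<le> ln (ln (real n))"
    using ln_ln_ge_1(1)[OF m] by simp
  then have "real m * ln (ln (real m)) \<le> real n * ln (ln (real n))"
    using ln_ln_ge_1(2)[OF m] n by (intro mult_mono) auto
  then show "lil_rate m \<le> lil_rate n"
    unfolding lil_rate_def by simp
qed

lemma lil_rate_smallo: "lil_rate \<in> o(real)"
  unfolding lil_rate_def by real_asymp

lemma lil_rate_div_square_bigo: "(\<lambda>t. (lil_rate t / real t)\<^sup>2) \<in> O(\<lambda>t. ln (ln (real t)) / real t)"
  unfolding lil_rate_def by real_asymp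

section \<open>Dyadic chaining\<close>

lemma ln_le_2_sqrt:
  fixes x :: real
  assumes "0 < x"
  shows "ln x \<le> 2 * sqrt x"
proof -
  have "ln (sqrt x) \<le> sqrt x - 1"
    using assms by (intro ln_le_minus_one) simp
  then show ?thesis
    using assms by (simp add: ln_sqrt)
qed

lemma sum_power_le:
  fixes r :: real
  assumes "1 < r"
  shows "(\<Sum>j<L. r ^ j) \<le> r ^ L / (r - 1)"
proof -
  have "(\<Sum>j<L. r ^ j) = (r ^ L - 1) / (r - 1)"
    using assms by (simp add: sum_gp_strict field_simps)
  also have "\<dots> \<le> r ^ L / (r - 1)"
    using assms by (simp add: divide_right_mono)
  finally show ?thesis .
qed

definition dyadic_block :: "(nat \<Rightarrow> real) \<Rightarrow> nat \<Rightarrow> nat \<Rightarrow> real" where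
  "dyadic_block f j q = (\<Sum>i = q * 2 ^ Suc j + 1 .. q * 2 ^ Suc j + 2 ^ j. f i)"

(* With radius sqrt (8 c) times this, the tail bound for block (j, q) of c-sub-Gaussian
   variables is 2 ((j + 2) (q + 2))^-4, summable over all pairs; the q-dependence costs only
   O(sqrt n) when summed over the blocks that make up {1..n}. *)
definition dyadic_radius :: "nat \<Rightarrow> nat \<Rightarrow> real" where
  "dyadic_radius j q = sqrt (2 ^ j * ln ((real j + 2) * (real q + 2)))"

lemma dyadic_radius_nonneg: "0 \<le> dyadic_radius j q"
proof -
  have "1 \<le> (real j + 2) * (real q + 2)"
    using mult_mono[of 1 "real j + 2" 1 "real q + 2"] by simp
  then show ?thesis
    unfolding dyadic_radius_def by (intro real_sqrt_ge_zero mult_nonneg_nonneg ln_ge_zero) auto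
qed

lemma sum_eq_sum_dyadic_blocks:
  fixes f :: "nat \<Rightarrow> real"
  assumes "n < 2 ^ L"
  shows "(\<Sum>i = 1..n. f i) =
    (\<Sum>j<L. if odd (n div 2 ^ j) then dyadic_block f j (n div 2 ^ Suc j) else 0)"
proof -
  define g where "g j = (\<Sum>i = 1 .. n div 2 ^ j * 2 ^ j. f i)" for j
  have step: "g j - g (Suc j) = (if odd (n div 2 ^ j) then dyadic_block f j (n div 2 ^ Suc j) else 0)"
    for j
  proof -
    define a where "a = n div 2 ^ j"
    define m where "m = n div 2 ^ Suc j"
    have m: "m = a div 2"
      unfolding m_def a_def by (simp add: div_mult2_eq power_Suc2 del: power_Suc)
    have am: "a * 2 ^ j = m * 2 ^ Suc j + a mod 2 * 2 ^ j"
      unfolding m by (metis add_mult_distrib mult.assoc mult.commute div_mult_mod_eq power_Suc)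
    have g_Suc: "g (Suc j) = (\<Sum>i = 1 .. m * 2 ^ Suc j. f i)"
      by (simp add: g_def m_def)
    show ?thesis
    proof (cases "odd a")
      case True
      then have a_odd: "a * 2 ^ j = m * 2 ^ Suc j + 2 ^ j"
        using am by (simp add: odd_iff_mod_2_eq_one)
      have "g j = (\<Sum>i = 1 .. m * 2 ^ Suc j. f i) + dyadic_block f j m"
        unfolding g_def dyadic_block_def a_def[symmetric] a_odd by (rule sum.ub_add_nat) simp
      then show ?thesis using True g_Suc by (simp add: a_def m_def)
    next
      case False
      then have "a * 2 ^ j = m * 2 ^ Suc j"
        using am by simp
      then have "g j = g (Suc j)"
        unfolding g_Suc by (simp add: g_def a_def mult.assoc)
      then show ?thesis using False by (simp add: a_def)
    qed
  qed
  have "(\<Sum>i = 1..n. f i) = g 0 - g L"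
    using assms by (simp add: g_def)
  also have "\<dots> = (\<Sum>j<L. g j - g (Suc j))"
    by (rule sum_lessThan_telescope'[symmetric])
  finally show ?thesis by (simp only: step)
qed

lemma ln_dyadic_level_le:
  assumes n: "27 \<le> n" and L: "2 ^ L \<le> 2 * n" and j: "j < L"
  shows "ln (real j + 2) \<le> 3 * ln (ln (real n))"
proof -
  have ln_n: "1 \<le> ln (real n)" "1 \<le> ln (ln (real n))"
    using ln_ln_ge_1[OF n] by auto
  have "real L * ln 2 = ln (2 ^ L)"
    by (simp add: ln_realpow)
  also have "\<dots> \<le> ln (2 * real n)"
    using n of_nat_mono[OF L] by (subst ln_le_cancel_iff) auto
  also have "\<dots> = ln 2 + ln (real n)"
    using n by (simp add: ln_mult)
  finally have "(real L - 1) * ln 2 \<le> ln (real n)"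
    by (simp add: algebra_simps)
  moreover have "2 / 3 * real L - 2 / 3 \<le> (real L - 1) * ln 2"
    using j ln2_ge_two_thirds mult_left_mono[of "2 / 3" "ln 2" "real L - 1"] by simp
  ultimately have "real L - 1 \<le> 3 / 2 * ln (real n)"
    by linarith
  moreover have "real j + 1 \<le> real L"
    using j by simp
  ultimately have "real j + 2 \<le> 4 * ln (real n)"
    using ln_n by linarith
  then have "ln (real j + 2) \<le> ln (4 * ln (real n))"
    by (subst ln_le_cancel_iff) auto
  also have "\<dots> = 2 * ln 2 + ln (ln (real n))"
    using ln_n by (simp add: ln_mult flip: ln_realpow[of 2 2, simplified])
  also have "\<dots> \<le> 3 * ln (ln (real n))"
    using ln_2_less_1 ln_n by linarith
  finally show ?thesis .
qed

lemma dyadic_radius_le: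
  assumes n: "27 \<le> n" and L: "2 ^ L \<le> 2 * n" and j: "j < L"
  shows "dyadic_radius j (n div 2 ^ Suc j)
    \<le> sqrt (3 * ln (ln (real n))) * sqrt 2 ^ j + sqrt 2 * sqrt (sqrt (3 * real n)) * sqrt (sqrt 2) ^ j"
proof -
  define a :: real where "a = 2 ^ j"
  define q where "q = n div 2 ^ Suc j"
  have a: "a > 0" by (simp add: a_def)
  have "q * 2 ^ Suc j \<le> n"
    unfolding q_def by (rule div_times_less_eq_dividend)
  then have "real q * (2 * a) \<le> real n"
    unfolding a_def using of_nat_mono by fastforce
  moreover have "(2::nat) ^ Suc j \<le> 2 * n"
    using power_increasing[of "Suc j" L "2::nat"] j L by simp
  then have "2 * a \<le> 2 * real n"
    unfolding a_def using of_nat_mono by fastforce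
  ultimately have block_length: "a * (real q + 2) \<le> 3 * real n"
    by (simp add: algebra_simps)
  have "ln ((real j + 2) * (real q + 2)) = ln (real j + 2) + ln (real q + 2)"
    by (simp add: ln_mult)
  then have "dyadic_radius j q = sqrt (a * ln (real j + 2) + a * ln (real q + 2))"
    by (simp add: dyadic_radius_def a_def distrib_left)
  also have "\<dots> \<le> sqrt (a * ln (real j + 2)) + sqrt (a * ln (real q + 2))"
    using a by (intro sqrt_add_le_add_sqrt) auto
  also have "sqrt (a * ln (real j + 2)) \<le> sqrt (a * (3 * ln (ln (real n))))"
    using a ln_dyadic_level_le[OF n L j] by (intro real_sqrt_le_mono mult_left_mono) auto
  also have "\<dots> = sqrt (3 * ln (ln (real n))) * sqrt 2 ^ j"
    by (simp add: a_def real_sqrt_mult real_sqrt_power)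
  also have "sqrt (a * ln (real q + 2)) \<le> sqrt (2 * sqrt a * sqrt (3 * real n))"
  proof (rule real_sqrt_le_mono)
    have "a * ln (real q + 2) \<le> a * (2 * sqrt (real q + 2))"
      using a ln_le_2_sqrt[of "real q + 2"] by (intro mult_left_mono) auto
    also have "\<dots> = 2 * sqrt a * sqrt (a * (real q + 2))"
      using a by (simp add: real_sqrt_mult)
    also have "\<dots> \<le> 2 * sqrt a * sqrt (3 * real n)"
      using a block_length by (intro mult_left_mono real_sqrt_le_mono) auto
    finally show "a * ln (real q + 2) \<le> 2 * sqrt a * sqrt (3 * real n)" .
  qed
  also have "\<dots> = sqrt 2 * sqrt (sqrt (3 * real n)) * sqrt (sqrt 2) ^ j"
    by (simp add: a_def real_sqrt_mult real_sqrt_power)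
  finally show ?thesis by (simp add: q_def)
qed

lemma sum_dyadic_radius_le:
  "\<exists>K. \<forall>n L. 27 \<le> n \<longrightarrow> 2 ^ L \<le> 2 * n \<longrightarrow>
     (\<Sum>j<L. dyadic_radius j (n div 2 ^ Suc j)) \<le> K * lil_rate n"
proof -
  define s :: real where "s = sqrt 2"
  define r :: real where "r = sqrt (sqrt 2)"
  have s: "1 < s" and r: "1 < r" by (simp_all add: s_def r_def)
  define K where "K = sqrt 3 * sqrt 2 / (s - 1) + sqrt 2 * sqrt (sqrt 6) / (r - 1)"
  have "(\<Sum>j<L. dyadic_radius j (n div 2 ^ Suc j)) \<le> K * lil_rate n"
    if n: "27 \<le> n" and L: "2 ^ L \<le> 2 * n" for n L :: nat
  proof -
    define ll where "ll = ln (ln (real n))"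
    have ll: "1 \<le> ll" using ln_ln_ge_1(2)[OF n] by (simp add: ll_def)
    have L': "(2::real) ^ L \<le> 2 * real n"
      using of_nat_mono[OF L] by simp
    have "(\<Sum>j<L. dyadic_radius j (n div 2 ^ Suc j))
        \<le> (\<Sum>j<L. sqrt (3 * ll) * s ^ j + sqrt 2 * sqrt (sqrt (3 * real n)) * r ^ j)"
      unfolding ll_def s_def r_def by (intro sum_mono dyadic_radius_le[OF n L]) simp
    also have "\<dots> = sqrt (3 * ll) * (\<Sum>j<L. s ^ j) + sqrt 2 * sqrt (sqrt (3 * real n)) * (\<Sum>j<L. r ^ j)"
      by (simp add: sum.distrib sum_distrib_left)
    also have "\<dots> \<le> sqrt (3 * ll) * (s ^ L / (s - 1)) + sqrt 2 * sqrt (sqrt (3 * real n)) * (r ^ L / (r - 1))"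
      using ll by (intro add_mono mult_left_mono sum_power_le s r) auto
    also have "s ^ L = sqrt (2 ^ L)" by (simp add: s_def real_sqrt_power)
    also have "r ^ L = sqrt (sqrt (2 ^ L))" by (simp add: r_def real_sqrt_power)
    also have "sqrt (3 * ll) * (sqrt (2 ^ L) / (s - 1)) \<le> sqrt (3 * ll) * (sqrt (2 * real n) / (s - 1))"
      using L' s ll by (intro mult_left_mono divide_right_mono real_sqrt_le_mono) auto
    also have "sqrt 2 * sqrt (sqrt (3 * real n)) * (sqrt (sqrt (2 ^ L)) / (r - 1))
        \<le> sqrt 2 * sqrt (sqrt (3 * real n)) * (sqrt (sqrt (2 * real n)) / (r - 1))"
      using L' r by (intro mult_left_mono divide_right_mono real_sqrt_le_mono) auto
    also have "sqrt (3 * ll) * (sqrt (2 * real n) / (s - 1)) = sqrt 3 * sqrt 2 / (s - 1) * sqrt (real n * ll)"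
      by (simp add: real_sqrt_mult)
    also have "sqrt 2 * sqrt (sqrt (3 * real n)) * (sqrt (sqrt (2 * real n)) / (r - 1))
        = sqrt 2 * sqrt (sqrt 6) / (r - 1) * sqrt (real n)"
    proof -
      have "sqrt (sqrt (3 * real n)) * sqrt (sqrt (2 * real n)) = sqrt (sqrt 6) * sqrt (real n)"
        by (simp flip: real_sqrt_mult) (simp add: real_sqrt_mult)
      then show ?thesis by (simp add: field_simps)
    qed
    also have "sqrt 2 * sqrt (sqrt 6) / (r - 1) * sqrt (real n)
        \<le> sqrt 2 * sqrt (sqrt 6) / (r - 1) * sqrt (real n * ll)"
      using ll r mult_left_mono[OF ll, of "real n"] by (intro mult_left_mono real_sqrt_le_mono) auto
    finally show ?thesis
      by (simp add: K_def lil_rate_def ll_def algebra_simps)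
  qed
  then show ?thesis by blast
qed

lemma partial_sums_bigo_lil_rate_of_dyadic_blocks:
  fixes f :: "nat \<Rightarrow> real"
  assumes finite: "finite {(j, q). \<kappa> * dyadic_radius j q < \<bar>dyadic_block f j q\<bar>}" and \<kappa>: "0 \<le> \<kappa>"
  shows "(\<lambda>n. \<Sum>i = 1..n. f i) \<in> O(lil_rate)"
proof -
  define E where "E = {(j, q). \<kappa> * dyadic_radius j q < \<bar>dyadic_block f j q\<bar>}"
  define w where "w = (\<lambda>(j, q). \<bar>dyadic_block f j q\<bar>)"
  define B where "B = (\<Sum>p\<in>E. w p)"
  have B: "0 \<le> B" unfolding B_def w_def by (intro sum_nonneg) auto
  obtain K where K: "\<And>n L. 27 \<le> n \<Longrightarrow> 2 ^ L \<le> 2 * n \<Longrightarrow>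
      (\<Sum>j<L. dyadic_radius j (n div 2 ^ Suc j)) \<le> K * lil_rate n"
    using sum_dyadic_radius_le by blast
  have "\<bar>\<Sum>i = 1..n. f i\<bar> \<le> (B + \<kappa> * K) * lil_rate n" if n: "27 \<le> n" for n
  proof -
    obtain L0 where L0: "2 ^ L0 \<le> n" "n < 2 ^ Suc L0"
      using ex_power_ivl1[of 2 n] n by auto
    define L where "L = Suc L0"
    have L: "n < 2 ^ L" "2 ^ L \<le> 2 * n" using L0 by (simp_all add: L_def)
    define q where "q j = n div 2 ^ Suc j" for j
    define g where "g j = (j, q j)" for j
    have term_le: "\<bar>if odd (n div 2 ^ j) then dyadic_block f j (q j) else 0\<bar>
        \<le> (if g j \<in> E then w (g j) else 0) + \<kappa> * dyadic_radius j (q j)" for j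
      using \<kappa> dyadic_radius_nonneg[of j "q j"] by (auto simp: E_def w_def g_def)
    have "(\<Sum>j<L. if g j \<in> E then w (g j) else 0) = (\<Sum>p\<in>g ` {..<L}. if p \<in> E then w p else 0)"
      by (subst sum.reindex) (auto simp: inj_on_def g_def)
    also have "\<dots> = (\<Sum>p\<in>g ` {..<L} \<inter> E. w p)"
      by (simp add: sum.inter_restrict)
    also have "\<dots> \<le> B"
      unfolding B_def using finite by (intro sum_mono2) (auto simp: E_def w_def)
    finally have exceptional: "(\<Sum>j<L. if g j \<in> E then w (g j) else 0) \<le> B" .
    have "\<bar>\<Sum>i = 1..n. f i\<bar> = \<bar>\<Sum>j<L. if odd (n div 2 ^ j) then dyadic_block f j (q j) else 0\<bar>"
      by (simp only: sum_eq_sum_dyadic_blocks[OF L(1)] q_def)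
    also have "\<dots> \<le> (\<Sum>j<L. \<bar>if odd (n div 2 ^ j) then dyadic_block f j (q j) else 0\<bar>)"
      by (rule sum_abs)
    also have "\<dots> \<le> (\<Sum>j<L. (if g j \<in> E then w (g j) else 0) + \<kappa> * dyadic_radius j (q j))"
      by (intro sum_mono term_le)
    also have "\<dots> = (\<Sum>j<L. if g j \<in> E then w (g j) else 0) + \<kappa> * (\<Sum>j<L. dyadic_radius j (q j))"
      by (simp add: sum.distrib sum_distrib_left)
    also have "\<dots> \<le> B * lil_rate n + \<kappa> * (K * lil_rate n)"
      using exceptional K[OF n L(2)] \<kappa> B lil_rate_ge_1[OF n] mult_left_mono[of 1 "lil_rate n" B]
      by (intro add_mono mult_left_mono) (auto simp: q_def)
    finally show ?thesis by (simp add: algebra_simps)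
  qed
  moreover have "0 \<le> lil_rate n" if "27 \<le> n" for n
    using lil_rate_ge_1[OF that] by simp
  ultimately show ?thesis
    by (intro bigoI[of _ "B + \<kappa> * K"] eventually_sequentiallyI[of 27]) auto
qed

lemma prod_encode_add_one_le: "real (prod_encode (j, q)) + 1 \<le> ((real j + 2) * (real q + 2))\<^sup>2"
proof -
  have "triangle (j + q) \<le> (j + q) * (j + q + 1)"
    unfolding triangle_def by simp
  then have "prod_encode (j, q) + 1 \<le> (j + q) * (j + q + 1) + j + 1"
    unfolding prod_encode_def by simp
  also have "\<dots> \<le> ((j + 2) * (q + 2))\<^sup>2"
    by (simp add: power2_eq_square algebra_simps)
  finally have "real (prod_encode (j, q) + 1) \<le> real (((j + 2) * (q + 2))\<^sup>2)"
    by (rule of_nat_mono)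
  then show ?thesis by (simp add: algebra_simps)
qed

lemma (in prob_space) prob_large_dyadic_block_le:
  assumes indep: "indep_vars (\<lambda>_. borel) X {1..}"
    and subG: "\<And>i. 1 \<le> i \<Longrightarrow> subgaussian M c (X i)" and c: "c > 0"
  shows "prob {\<omega> \<in> space M. sqrt (8 * c) * dyadic_radius j q < \<bar>dyadic_block (\<lambda>i. X i \<omega>) j q\<bar>}
    \<le> 2 / ((real j + 2) * (real q + 2)) ^ 4"
proof -
  have [measurable]: "X i \<in> borel_measurable M" if "1 \<le> i" for i
    using indep that unfolding indep_vars_def by auto
  define I where "I = {q * 2 ^ Suc j + 1 .. q * 2 ^ Suc j + 2 ^ j}"
  define y where "y = (real j + 2) * (real q + 2)"
  have y: "1 < y"
    unfolding y_def using mult_mono[of 2 "real j + 2" 1 "real q + 2"] by simp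
  define \<epsilon> where "\<epsilon> = sqrt (8 * c) * dyadic_radius j q"
  have \<epsilon>_sq: "\<epsilon>\<^sup>2 = 8 * c * 2 ^ j * ln y"
    using c y by (simp add: \<epsilon>_def dyadic_radius_def y_def power_mult_distrib)
  have "\<epsilon> > 0"
    using c y by (simp add: \<epsilon>_def dyadic_radius_def y_def)
  have "prob {\<omega> \<in> space M. \<epsilon> < \<bar>dyadic_block (\<lambda>i. X i \<omega>) j q\<bar>}
      \<le> prob {\<omega> \<in> space M. \<epsilon> \<le> \<bar>\<Sum>i\<in>I. X i \<omega>\<bar>}"
    by (rule finite_measure_mono) (auto simp: I_def dyadic_block_def)
  also have "\<dots> \<le> 2 * exp (- \<epsilon>\<^sup>2 / (2 * c * card I))"
    using c \<open>\<epsilon> > 0\<close> subG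
    by (intro subgaussian_sum_tail_abs indep_vars_subset[OF indep]) (auto simp: I_def)
  also have "- \<epsilon>\<^sup>2 / (2 * c * card I) = - (4 * ln y)"
    using c by (simp add: \<epsilon>_sq I_def)
  also have "exp (- (4 * ln y)) = 1 / y ^ 4"
  proof -
    have "exp (4 * ln y) = y ^ 4"
      using y by (simp add: exp_of_nat_mult[of 4, simplified])
    then show ?thesis by (simp add: exp_minus field_simps)
  qed
  finally show ?thesis
    by (simp add: \<epsilon>_def y_def)
qed

lemma (in prob_space) AE_finite_large_dyadic_blocks:
  assumes indep: "indep_vars (\<lambda>_. borel) X {1..}"
    and subG: "\<And>i. 1 \<le> i \<Longrightarrow> subgaussian M c (X i)" and c: "c > 0"
  shows "AE \<omega> in M. finite {(j, q). sqrt (8 * c) * dyadic_radius j q < \<bar>dyadic_block (\<lambda>i. X i \<omega>) j q\<bar>}"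
proof -
  define bad where "bad k = (case prod_decode k of (j, q) \<Rightarrow>
    {\<omega> \<in> space M. sqrt (8 * c) * dyadic_radius j q < \<bar>dyadic_block (\<lambda>i. X i \<omega>) j q\<bar>})" for k
  have [measurable]: "X i \<in> borel_measurable M" if "1 \<le> i" for i
    using indep that unfolding indep_vars_def by auto
  have [measurable]: "(\<lambda>\<omega>. dyadic_block (\<lambda>i. X i \<omega>) j q) \<in> borel_measurable M" for j q
    unfolding dyadic_block_def by (intro borel_measurable_sum) auto
  have [measurable]: "bad k \<in> events" for k
    unfolding bad_def by (cases "prod_decode k") simp
  have prob_bad: "prob (bad k) \<le> 2 / (real k + 1)\<^sup>2" for k
  proof -
    obtain j q where k: "prod_decode k = (j, q)"
      by (cases "prod_decode k")
    then have "k = prod_encode (j, q)"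
      by (metis prod_decode_inverse)
    define y where "y = (real j + 2) * (real q + 2)"
    have "(real k + 1)\<^sup>2 \<le> (y\<^sup>2)\<^sup>2"
      using prod_encode_add_one_le[of j q] \<open>k = prod_encode (j, q)\<close>
      by (intro power_mono) (auto simp: y_def)
    moreover have "0 < real k + 1"
      by simp
    ultimately have "2 / y ^ 4 \<le> 2 / (real k + 1)\<^sup>2"
      by (simp flip: power_mult) (simp add: frac_le)
    then show ?thesis
      using prob_large_dyadic_block_le[OF indep subG c, of j q] by (simp add: bad_def k y_def)
  qed
  have summable: "summable (\<lambda>k. 2 / (real k + 1)\<^sup>2)"
  proof -
    have "summable (\<lambda>k. inverse (real (Suc k) ^ 2))"
      using inverse_power_summable[of 2] by (subst summable_Suc_iff) simp
    from summable_mult[OF this, of 2] show ?thesis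
      by (simp add: divide_inverse add.commute)
  qed
  have "AE \<omega> in M. eventually (\<lambda>k. \<omega> \<in> space M - bad k) sequentially"
    using prob_bad
    by (intro borel_cantelli_AE1 summable_comparison_test'[OF summable, of 0]) (auto simp: emeasure_eq_measure)
  with AE_space show ?thesis
  proof eventually_elim
    case (elim \<omega>)
    then have "finite {k. \<omega> \<in> bad k}"
      by (auto simp: cofinite_eq_sequentially[symmetric] eventually_cofinite elim: finite_subset[rotated])
    moreover have "{(j, q). sqrt (8 * c) * dyadic_radius j q < \<bar>dyadic_block (\<lambda>i. X i \<omega>) j q\<bar>}
        \<subseteq> prod_decode ` {k. \<omega> \<in> bad k}"
    proof (rule subsetI, clarify)
      fix j q assume "sqrt (8 * c) * dyadic_radius j q < \<bar>dyadic_block (\<lambda>i. X i \<omega>) j q\<bar>"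
      then have "\<omega> \<in> bad (prod_encode (j, q))"
        using elim by (simp add: bad_def)
      then show "(j, q) \<in> prod_decode ` {k. \<omega> \<in> bad k}"
        by (intro image_eqI[of _ _ "prod_encode (j, q)"]) simp_all
    qed
    ultimately show ?case
      by (auto elim: finite_subset)
  qed
qed

lemma (in prob_space) subgaussian_partial_sums_bigo_lil_rate:
  assumes "indep_vars (\<lambda>_. borel) X {1..}"
    and "\<And>i. 1 \<le> i \<Longrightarrow> subgaussian M c (X i)" and "c > 0"
  shows "AE \<omega> in M. (\<lambda>n. \<Sum>i = 1..n. X i \<omega>) \<in> O(lil_rate)"
proof -
  have \<kappa>: "0 \<le> sqrt (8 * c)"
    using assms(3) by simp
  have "AE \<omega> in M. finite {(j, q). sqrt (8 * c) * dyadic_radius j q < \<bar>dyadic_block (\<lambda>i. X i \<omega>) j q\<bar>}"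
    by (rule AE_finite_large_dyadic_blocks) (use assms in auto)
  then show ?thesis
    by (rule eventually_mono) (erule partial_sums_bigo_lil_rate_of_dyadic_blocks[OF _ \<kappa>])
qed

section \<open>The two-sample mean\<close>

lemma two_sample_mean_error_le:
  fixes t T A B s K1 K2 K3 :: real
  assumes t: "0 < t" and T: "t / 4 \<le> T" "t / 4 \<le> t - T"
    and bounds: "\<bar>t - 2 * T\<bar> \<le> K1 * s" "\<bar>A\<bar> \<le> K2 * s" "\<bar>B\<bar> \<le> K3 * s"
  shows "\<bar>1 / 2 * (1 / T * A + 1 / (t - T) * B) - 1 / t * (A + B)\<bar> \<le> 2 * K1 * (K2 + K3) * (s / t)\<^sup>2"
proof -
  have T_pos: "0 < T" "0 < t - T" using t T by linarith+
  have "1 / 2 * (1 / T * A + 1 / (t - T) * B) - 1 / t * (A + B) = (t - 2 * T) / (2 * t) * (A / T - B / (t - T))"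
    using T_pos t by (simp add: field_simps)
  moreover have "\<bar>A / T\<bar> \<le> K2 * s / (t / 4)" "\<bar>B / (t - T)\<bar> \<le> K3 * s / (t / 4)"
    unfolding abs_divide using T_pos T bounds t abs_ge_zero[of A] abs_ge_zero[of B]
    by (intro frac_le; simp)+
  then have "\<bar>A / T - B / (t - T)\<bar> \<le> K2 * s / (t / 4) + K3 * s / (t / 4)"
    by linarith
  ultimately have "\<bar>1 / 2 * (1 / T * A + 1 / (t - T) * B) - 1 / t * (A + B)\<bar>
      \<le> K1 * s / (2 * t) * (K2 * s / (t / 4) + K3 * s / (t / 4))"
    using t bounds(1) by (auto simp: abs_mult intro!: mult_mono divide_right_mono)
  also have "\<dots> = 2 * K1 * (K2 + K3) * (s / t)\<^sup>2"
    using t by (simp add: field_simps power2_eq_square)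
  finally show ?thesis .
qed

lemma two_sample_mean_error_bigo:
  fixes T :: "nat \<Rightarrow> nat" and A B h :: "nat \<Rightarrow> real"
  assumes T_le: "\<And>t. T t \<le> t"
    and T_half: "(\<lambda>t. real (T t) - real t / 2) \<in> O(h)"
    and A: "A \<in> O(h)" and B: "B \<in> O(h)"
    and h_small: "h \<in> o(real)"
    and h_mono: "\<forall>\<^sub>F m in sequentially. \<forall>n\<ge>m. 0 \<le> h m \<and> h m \<le> h n"
  shows "(\<lambda>t. let T = T t; T' = t - T in
            1 / 2 * (1 / real T * A T + 1 / real T' * B T') - 1 / real t * (A T + B T'))
         \<in> O(\<lambda>t. (h t / real t)\<^sup>2)"
proof -
  obtain K1 where K1: "\<forall>\<^sub>F t in sequentially. \<bar>real (T t) - real t / 2\<bar> \<le> K1 * \<bar>h t\<bar>"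
    using T_half by (auto elim: landau_o.bigE)
  obtain K2 where "K2 > 0" and K2: "\<forall>\<^sub>F n in sequentially. \<bar>A n\<bar> \<le> K2 * \<bar>h n\<bar>"
    using A by (auto elim: landau_o.bigE)
  obtain K3 where "K3 > 0" and K3: "\<forall>\<^sub>F n in sequentially. \<bar>B n\<bar> \<le> K3 * \<bar>h n\<bar>"
    using B by (auto elim: landau_o.bigE)
  have "\<forall>\<^sub>F t in sequentially. \<bar>real (T t) - real t / 2\<bar> \<le> real t / 4"
    using landau_o.smallD[OF landau_o.big_small_trans[OF T_half h_small], of "1 / 4"] by simp
  with K1 K2 K3 h_mono have "\<forall>\<^sub>F n in sequentially.
      \<bar>real (T n) - real n / 2\<bar> \<le> K1 * \<bar>h n\<bar> \<and> \<bar>A n\<bar> \<le> K2 * \<bar>h n\<bar> \<and> \<bar>B n\<bar> \<le> K3 * \<bar>h n\<bar> \<and>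
      \<bar>real (T n) - real n / 2\<bar> \<le> real n / 4 \<and> (\<forall>m\<ge>n. 0 \<le> h n \<and> h n \<le> h m)"
    by (intro eventually_conj)
  then obtain N where N: "\<And>n. N \<le> n \<Longrightarrow>
      \<bar>real (T n) - real n / 2\<bar> \<le> K1 * \<bar>h n\<bar> \<and> \<bar>A n\<bar> \<le> K2 * \<bar>h n\<bar> \<and> \<bar>B n\<bar> \<le> K3 * \<bar>h n\<bar> \<and>
      \<bar>real (T n) - real n / 2\<bar> \<le> real n / 4 \<and> (\<forall>m\<ge>n. 0 \<le> h n \<and> h n \<le> h m)"
    unfolding eventually_sequentially by blast
  have "\<bar>let T = T t; T' = t - T in
          1 / 2 * (1 / real T * A T + 1 / real T' * B T') - 1 / real t * (A T + B T')\<bar>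
        \<le> 2 * (2 * K1) * (K2 + K3) * (h t / real t)\<^sup>2" if t: "4 * N + 1 \<le> t" for t
  proof -
    define T' where "T' = t - T t"
    have N_t: "N \<le> t" and t_pos: "0 < real t" using t by simp_all
    have T_large: "real t / 4 \<le> real (T t)" "real t / 4 \<le> real t - real (T t)"
      using N[OF N_t] by linarith+
    then have "N \<le> T t" "N \<le> T'"
      using t T_le[of t] by (simp_all add: T'_def of_nat_diff)
    then have "\<bar>A (T t)\<bar> \<le> K2 * h (T t)" "0 \<le> h (T t)" "h (T t) \<le> h t"
      and "\<bar>B T'\<bar> \<le> K3 * h T'" "0 \<le> h T'" "h T' \<le> h t"
      using N[of "T t"] N[of T'] T_le[of t] by (auto simp: T'_def)
    then have bound_A: "\<bar>A (T t)\<bar> \<le> K2 * h t" and bound_B: "\<bar>B T'\<bar> \<le> K3 * h t"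
      using \<open>K2 > 0\<close> \<open>K3 > 0\<close> by (meson mult_left_mono less_imp_le order.trans)+
    have bound_T: "\<bar>real t - 2 * real (T t)\<bar> \<le> 2 * K1 * h t"
    proof -
      have "\<bar>real t - 2 * real (T t)\<bar> = 2 * \<bar>real (T t) - real t / 2\<bar>"
        by (simp add: abs_if)
      moreover have "0 \<le> h t"
        using N[OF N_t] by auto
      ultimately show ?thesis
        using N[OF N_t] by simp
    qed
    show ?thesis
      using two_sample_mean_error_le[OF t_pos T_large bound_T bound_A bound_B] T_le[of t]
      by (simp add: Let_def T'_def of_nat_diff)
  qed
  then show ?thesis
    by (intro bigoI[of _ "2 * (2 * K1) * (K2 + K3)"] eventually_sequentiallyI[of "4 * N + 1"]) simp
qed

lemma succ_count_le: "succ_count S t \<omega> \<le> t"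
proof -
  have "succ_count S t \<omega> \<le> card {1..t}"
    unfolding succ_count_def by (intro card_mono) auto
  then show ?thesis by simp
qed

lemma real_succ_count_eq_sum:
  assumes "\<And>i. 1 \<le> i \<Longrightarrow> S i \<omega> \<in> {0, 1}"
  shows "real (succ_count S t \<omega>) = (\<Sum>i = 1..t. S i \<omega>)"
proof -
  have "(\<Sum>i = 1..t. S i \<omega>) = (\<Sum>i = 1..t. if S i \<omega> = 1 then 1 else 0)"
    using assms by (intro sum.cong) auto
  also have "\<dots> = (\<Sum>i \<in> {i \<in> {1..t}. S i \<omega> = 1}. 1)"
    by (rule sum.inter_filter[symmetric]) simp
  also have "\<dots> = real (card {i \<in> {1..t}. S i \<omega> = 1})"
    by simp
  finally show ?thesis by (simp add: succ_count_def)
qed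

theorem lemmaC2:
  fixes M :: "'a measure"
    and S G G' :: "nat \<Rightarrow> 'a \<Rightarrow> real"
  assumes "prob_space M"
    and indep: "prob_space.indep_vars M (\<lambda>_. borel) (joint_family S G G') joint_index"
    and bern_vals: "\<And>n. n \<ge> 1 \<Longrightarrow> AE \<omega> in M. S n \<omega> \<in> {0, 1}"
    and bern_half: "\<And>n. n \<ge> 1 \<Longrightarrow> measure M {\<omega> \<in> space M. S n \<omega> = 1} = 1 / 2"
    and gauss: "\<And>n. n \<ge> 1 \<Longrightarrow> distributed M lborel (G n) std_normal_density"
    and gauss': "\<And>n. n \<ge> 1 \<Longrightarrow> distributed M lborel (G' n) std_normal_density"
  shows "AE \<omega> in M.
    (\<lambda>t::nat.
       (let T = succ_count S t \<omega>; T' = t - T in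
          1 / 2 * (1 / real T * (\<Sum>i = 1..T. G i \<omega>) + 1 / real T' * (\<Sum>i = 1..T'. G' i \<omega>))
          - 1 / real t * ((\<Sum>i = 1..T. G i \<omega>) + (\<Sum>i = 1..T'. G' i \<omega>))))
    \<in> O(\<lambda>t. ln (ln (real t)) / real t)"
proof -
  interpret prob_space M by fact
  note indep_vars = indep_vars_joint_family[OF indep]
  have S_lil: "AE \<omega> in M. (\<lambda>n. \<Sum>i = 1..n. S i \<omega> - 1 / 2) \<in> O(lil_rate)"
  proof (rule subgaussian_partial_sums_bigo_lil_rate)
    show "indep_vars (\<lambda>_. borel) (\<lambda>i \<omega>. S i \<omega> - 1 / 2) {1..}"
      by (rule indep_vars_compose2[OF indep_vars(1)]) auto
    show "subgaussian M (1 / 4) (\<lambda>\<omega>. S i \<omega> - 1 / 2)" if "1 \<le> i" for i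
      using indep_vars(1) that bern_vals[OF that] bern_half[OF that]
      by (intro bernoulli_half_centered_subgaussian) (auto simp: indep_vars_def)
  qed simp
  have G_subG: "subgaussian M 1 (G i)" "subgaussian M 1 (G' i)" if "1 \<le> i" for i
    using gauss[OF that] gauss'[OF that] by (auto intro: std_normal_subgaussian)
  have G_lil: "AE \<omega> in M. (\<lambda>n. \<Sum>i = 1..n. G i \<omega>) \<in> O(lil_rate)"
    using subgaussian_partial_sums_bigo_lil_rate[OF indep_vars(2) G_subG(1)] by simp
  have G'_lil: "AE \<omega> in M. (\<lambda>n. \<Sum>i = 1..n. G' i \<omega>) \<in> O(lil_rate)"
    using subgaussian_partial_sums_bigo_lil_rate[OF indep_vars(3) G_subG(2)] by simp
  have S_01: "AE \<omega> in M. \<forall>i\<ge>1. S i \<omega> \<in> {0, 1}"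
    using bern_vals by (subst AE_all_countable) (auto intro: AE_I2)
  show ?thesis
    using S_01 S_lil G_lil G'_lil
  proof eventually_elim
    case (elim \<omega>)
    have "(\<lambda>t. real (succ_count S t \<omega>) - real t / 2) \<in> O(lil_rate)"
      using elim(1,2) by (simp add: real_succ_count_eq_sum sum_subtractf)
    then show ?case
      by (rule landau_o.big_trans[OF two_sample_mean_error_bigo lil_rate_div_square_bigo, rotated])
         (fact elim(3,4) succ_count_le lil_rate_smallo lil_rate_eventually_mono)+
  qed
qed

end
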